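(* Let $F$ be a finite group acting faithfully and transitively on an alphabet $\{0,\dots,q-1\}$, and let $\mathbb{T}$ be the $(q+1)$-regular tree. Then the discrete affine group $\mathrm{DA}_F(\mathbb{T})$ does not have Shalom's property $H_{\mathrm{FD}}$.
   Context: Fix an end of $\mathbb{T}$, a bi-infinite ray in $\mathbb{T}$ converging to this end, and a vertex $v$ on this ray. Removing $v$ leaves $q$ subtrees not containing the end; identify them with the alphabet $\{0,\dots,q-1\}$. The discrete affine group $\mathrm{DA}_F(\mathbb{T})$ is the group of automorphisms of $\mathbb{T}$ generated by an automorphism $t$ that translates along the ray (fixing the chosen end) together with the automorphisms permuting these $q$ subtrees according to the action of $F$. A finitely generated group has property $H_{\mathrm{FD}}$ if every unitary representation with nonzero first reduced cohomology (1-cocycles modulo the closure, for pointwise convergence, of 1-coboundaries) admits a nonzero finite-dimensional subrepresentation. *)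

theory Defs
  imports "HOL-Analysis.Analysis" "HOL-Algebra.Group_Action" "HOL-Algebra.Generated_Groups"
begin

text \<open>Vertices are pairs (n, y): n is the horocyclic level and y encodes the digits
  y k (k < n) in the alphabet {0..<q}; y vanishes for k >= n and for k sufficiently
  negative.  The parent of (n, y) is (n - 1, y with digit n - 1 erased), its q children are
  (n + 1, y(n := a)) for a < q.  The fixed end is the direction n -> -infinity, the
  bi-infinite ray is {(n, 0) | n}, and the vertex v is (0, 0).  The q subtrees of the tree
  minus v not containing the end are indexed by the digit y 0.\<close>

type_synonym vert = "int \<times> (int \<Rightarrow> nat)"

definition tree_V :: "nat \<Rightarrow> vert set" where
  "tree_V q = {(n, y). (\<forall>k. y k < q) \<and> (\<forall>k. n \<le> k \<longrightarrow> y k = 0) \<and> (\<exists>N. \<forall>k<N. y k = 0)}"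

definition tree_adj :: "nat \<Rightarrow> vert \<Rightarrow> vert \<Rightarrow> bool" where
  "tree_adj q u w \<longleftrightarrow> u \<in> tree_V q \<and> w \<in> tree_V q \<and>
     ((fst w = fst u + 1 \<and> (\<forall>k < fst u. snd w k = snd u k)) \<or>
      (fst u = fst w + 1 \<and> (\<forall>k < fst w. snd u k = snd w k)))"

definition tree_ray :: "int \<Rightarrow> vert" where
  "tree_ray n = (n, \<lambda>_. 0)"

definition tree_v :: vert where
  "tree_v = tree_ray 0"

definition shift_t :: "vert \<Rightarrow> vert" where
  "shift_t x = (fst x + 1, \<lambda>k. snd x (k - 1))"

definition subtree_below_v :: "nat \<Rightarrow> nat \<Rightarrow> vert set" where
  "subtree_below_v q a = {(n, y) \<in> tree_V q. 1 \<le> n \<and> (\<forall>k<0. y k = 0) \<and> y 0 = a}"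

definition perm_below_v :: "nat \<Rightarrow> (nat \<Rightarrow> nat) \<Rightarrow> vert \<Rightarrow> vert" where
  "perm_below_v q p x =
     (if \<exists>a<q. x \<in> subtree_below_v q a then (fst x, (snd x)(0 := p (snd x 0))) else x)"

definition DA :: "nat \<Rightarrow> ('f, 'c) monoid_scheme \<Rightarrow> ('f \<Rightarrow> nat \<Rightarrow> nat) \<Rightarrow> (vert \<Rightarrow> vert) monoid" where
  "DA q F \<phi> = subgroup_generated (BijGroup (tree_V q))
      (insert (restrict shift_t (tree_V q))
         ((\<lambda>g. restrict (perm_below_v q (\<phi> g)) (tree_V q)) ` carrier F))"

definition ell2 :: "(nat \<Rightarrow> complex) set" where
  "ell2 = {x. summable (\<lambda>n. (cmod (x n))\<^sup>2)}"

definition l2inner :: "(nat \<Rightarrow> complex) \<Rightarrow> (nat \<Rightarrow> complex) \<Rightarrow> complex" where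
  "l2inner x y = (\<Sum>n. x n * cnj (y n))"

definition l2norm :: "(nat \<Rightarrow> complex) \<Rightarrow> real" where
  "l2norm x = sqrt (\<Sum>n. (cmod (x n))\<^sup>2)"

definition vadd :: "(nat \<Rightarrow> complex) \<Rightarrow> (nat \<Rightarrow> complex) \<Rightarrow> (nat \<Rightarrow> complex)" where
  "vadd x y = (\<lambda>n. x n + y n)"

definition vsub :: "(nat \<Rightarrow> complex) \<Rightarrow> (nat \<Rightarrow> complex) \<Rightarrow> (nat \<Rightarrow> complex)" where
  "vsub x y = (\<lambda>n. x n - y n)"

definition vscale :: "complex \<Rightarrow> (nat \<Rightarrow> complex) \<Rightarrow> (nat \<Rightarrow> complex)" where
  "vscale c x = (\<lambda>n. c * x n)"

definition unitary_op :: "((nat \<Rightarrow> complex) \<Rightarrow> (nat \<Rightarrow> complex)) \<Rightarrow> bool" where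
  "unitary_op U \<longleftrightarrow> U ` ell2 = ell2 \<and>
     (\<forall>x\<in>ell2. \<forall>y\<in>ell2. U (vadd x y) = vadd (U x) (U y)) \<and>
     (\<forall>c. \<forall>x\<in>ell2. U (vscale c x) = vscale c (U x)) \<and>
     (\<forall>x\<in>ell2. \<forall>y\<in>ell2. l2inner (U x) (U y) = l2inner x y)"

definition unitary_rep ::
  "('a, 'b) monoid_scheme \<Rightarrow> ('a \<Rightarrow> (nat \<Rightarrow> complex) \<Rightarrow> (nat \<Rightarrow> complex)) \<Rightarrow> bool" where
  "unitary_rep G \<pi> \<longleftrightarrow> (\<forall>g\<in>carrier G. unitary_op (\<pi> g)) \<and>
     (\<forall>g\<in>carrier G. \<forall>h\<in>carrier G. \<forall>x\<in>ell2. \<pi> (g \<otimes>\<^bsub>G\<^esub> h) x = \<pi> g (\<pi> h x)) \<and>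
     (\<forall>x\<in>ell2. \<pi> \<one>\<^bsub>G\<^esub> x = x)"

definition cocycle ::
  "('a, 'b) monoid_scheme \<Rightarrow> ('a \<Rightarrow> (nat \<Rightarrow> complex) \<Rightarrow> (nat \<Rightarrow> complex)) \<Rightarrow> ('a \<Rightarrow> (nat \<Rightarrow> complex)) \<Rightarrow> bool" where
  "cocycle G \<pi> b \<longleftrightarrow> (\<forall>g\<in>carrier G. b g \<in> ell2) \<and>
     (\<forall>g\<in>carrier G. \<forall>h\<in>carrier G. b (g \<otimes>\<^bsub>G\<^esub> h) = vadd (b g) (\<pi> g (b h)))"

text \<open>b lies in the closure, for the topology of pointwise convergence on G, of the space
  of coboundaries g |-> pi g xi - xi.\<close>
definition in_closure_coboundaries ::
  "('a, 'b) monoid_scheme \<Rightarrow> ('a \<Rightarrow> (nat \<Rightarrow> complex) \<Rightarrow> (nat \<Rightarrow> complex)) \<Rightarrow> ('a \<Rightarrow> (nat \<Rightarrow> complex)) \<Rightarrow> bool" where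
  "in_closure_coboundaries G \<pi> b \<longleftrightarrow>
     (\<forall>S e. finite S \<and> S \<subseteq> carrier G \<and> e > 0 \<longrightarrow>
        (\<exists>\<xi>\<in>ell2. \<forall>g\<in>S. l2norm (vsub (b g) (vsub (\<pi> g \<xi>) \<xi>)) < e))"

definition nonzero_reduced_H1 ::
  "('a, 'b) monoid_scheme \<Rightarrow> ('a \<Rightarrow> (nat \<Rightarrow> complex) \<Rightarrow> (nat \<Rightarrow> complex)) \<Rightarrow> bool" where
  "nonzero_reduced_H1 G \<pi> \<longleftrightarrow> (\<exists>b. cocycle G \<pi> b \<and> \<not> in_closure_coboundaries G \<pi> b)"

definition cspan :: "(nat \<Rightarrow> complex) set \<Rightarrow> (nat \<Rightarrow> complex) set" where
  "cspan S = {x. \<exists>c. x = (\<lambda>n. \<Sum>v\<in>S. c v * v n)}"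

definition has_fd_subrep ::
  "('a, 'b) monoid_scheme \<Rightarrow> ('a \<Rightarrow> (nat \<Rightarrow> complex) \<Rightarrow> (nat \<Rightarrow> complex)) \<Rightarrow> bool" where
  "has_fd_subrep G \<pi> \<longleftrightarrow> (\<exists>S. finite S \<and> S \<subseteq> ell2 \<and> cspan S \<noteq> {\<lambda>_. 0} \<and>
     (\<forall>g\<in>carrier G. \<forall>x\<in>cspan S. \<pi> g x \<in> cspan S))"

text \<open>Shalom's property H_FD (tested on unitary representations on the separable
  Hilbert space l2(N)).\<close>
definition property_HFD :: "('a, 'b) monoid_scheme \<Rightarrow> bool" where
  "property_HFD G \<longleftrightarrow>
     (\<forall>\<pi>. unitary_rep G \<pi> \<and> nonzero_reduced_H1 G \<pi> \<longrightarrow> has_fd_subrep G \<pi>)"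

end

theory Submission
  imports Defs "HOL-Library.Function_Algebras"
begin

text \<open>The group acts on the countable set of geodesic lines joining the fixed end to the
  boundary points with finitely many nonzero digits. On l2 of this set, its permutation
  representation carries the cocycle b(g) = h \<circ> g^(-1) - h + \<beta>(g), where h(line) is the
  position of the last nonzero digit of the line and \<beta>(g) the level shift of g: the formal
  coboundary of the unbounded height h, corrected by a homomorphism to the integers. On the
  generators b takes finitely supported values, so b is an l2-cocycle; it is not a limit of
  coboundaries because b(t) equals 1 at the line through the ray, which t fixes. Finally, a
  finite-dimensional invariant subspace would contain a vector that is nonzero on a line with
  infinite t-orbit, and its translates by large powers of t are nearly disjointly supported,
  hence linearly independent.\<close>

section \<open>Square-summable sequences\<close>

lemma ell2_add: assumes "x \<in> ell2" "y \<in> ell2" shows "(\<lambda>n. x n + y n) \<in> ell2"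
proof -
  have bound: "norm ((cmod (x n + y n))\<^sup>2) \<le> 2 * (cmod (x n))\<^sup>2 + 2 * (cmod (y n))\<^sup>2" for n
  proof -
    have "(cmod (x n + y n))\<^sup>2 \<le> (cmod (x n) + cmod (y n))\<^sup>2"
      by (rule power_mono[OF norm_triangle_ineq norm_ge_zero])
    also have "\<dots> \<le> 2 * (cmod (x n))\<^sup>2 + 2 * (cmod (y n))\<^sup>2"
      using sum_squares_bound[of "cmod (x n)" "cmod (y n)"] by (simp add: power2_sum)
    finally show ?thesis by simp
  qed
  have "summable (\<lambda>n. 2 * (cmod (x n))\<^sup>2 + 2 * (cmod (y n))\<^sup>2)"
    using assms unfolding ell2_def by (intro summable_add summable_mult) auto
  then show ?thesis
    unfolding ell2_def mem_Collect_eq by (rule summable_comparison_test'[OF _ bound])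
qed

lemma ell2_scale: "x \<in> ell2 \<Longrightarrow> (\<lambda>n. c * x n) \<in> ell2"
  unfolding ell2_def by (simp add: norm_mult power_mult_distrib summable_mult)

lemma ell2_uminus: "x \<in> ell2 \<Longrightarrow> (\<lambda>n. - x n) \<in> ell2"
  unfolding ell2_def by simp

lemma ell2_diff: "x \<in> ell2 \<Longrightarrow> y \<in> ell2 \<Longrightarrow> (\<lambda>n. x n - y n) \<in> ell2"
  using ell2_add[of x "\<lambda>n. - y n"] ell2_uminus[of y] by simp

lemma ell2_finite_support: "finite N \<Longrightarrow> (\<And>n. n \<notin> N \<Longrightarrow> x n = 0) \<Longrightarrow> x \<in> ell2"
  unfolding ell2_def mem_Collect_eq by (rule summable_finite[of N]) auto

lemma ell2_zero: "(\<lambda>n. 0) \<in> ell2"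
  by (rule ell2_finite_support[of "{}"]) auto

lemma norm_le_l2norm: assumes "x \<in> ell2" shows "cmod (x n) \<le> l2norm x"
proof -
  have "(cmod (x n))\<^sup>2 \<le> (\<Sum>n. (cmod (x n))\<^sup>2)"
    using sum_le_suminf[of "\<lambda>n. (cmod (x n))\<^sup>2" "{n}"] assms unfolding ell2_def by simp
  then have "sqrt ((cmod (x n))\<^sup>2) \<le> l2norm x"
    unfolding l2norm_def by (rule real_sqrt_le_mono)
  then show ?thesis by simp
qed

lemma ell2_finite_large_coords: assumes "x \<in> ell2" "0 < d" shows "finite {n. d \<le> cmod (x n)}"
proof -
  have "(\<lambda>n. (cmod (x n))\<^sup>2) \<longlonglongrightarrow> 0"
    using assms(1) unfolding ell2_def mem_Collect_eq by (rule summable_LIMSEQ_zero)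
  from order_tendstoD(2)[OF this, of "d\<^sup>2"]
  have "eventually (\<lambda>n. (cmod (x n))\<^sup>2 < d\<^sup>2) sequentially"
    using assms(2) by simp
  then obtain N where N: "\<And>n. n \<ge> N \<Longrightarrow> (cmod (x n))\<^sup>2 < d\<^sup>2"
    unfolding eventually_sequentially by auto
  have "{n. d \<le> cmod (x n)} \<subseteq> {..<N}"
  proof
    fix n assume "n \<in> {n. d \<le> cmod (x n)}"
    then have "d\<^sup>2 \<le> (cmod (x n))\<^sup>2" using assms(2) by (simp add: power_mono)
    then show "n \<in> {..<N}" using N by (meson leI lessThan_iff not_less)
  qed
  then show ?thesis by (rule finite_subset) simp
qed

lemma summable_norm_reindex_bij:
  fixes f :: "nat \<Rightarrow> 'a::banach"
  assumes "bij p" and "summable (\<lambda>n. norm (f n))"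
  shows "summable (\<lambda>n. norm (f (p n)))" and "(\<Sum>n. f (p n)) = (\<Sum>n. f n)"
proof -
  have p: "bij_betw p UNIV UNIV" using assms(1) by (simp add: bij_def)
  have "(\<lambda>n. norm (f n)) summable_on UNIV"
    using assms(2) summable_on_UNIV_nonneg_real_iff[of "\<lambda>n. norm (f n)"] by simp
  then show "summable (\<lambda>n. norm (f (p n)))"
    using summable_on_reindex_bij_betw[OF p, of "\<lambda>n. norm (f n)"]
      summable_on_UNIV_nonneg_real_iff[of "\<lambda>n. norm (f (p n))"] by simp
  have "(f has_sum suminf f) UNIV"
    using assms(2) by (simp add: norm_summable_imp_has_sum summable_norm_cancel summable_sums)
  then have "((\<lambda>n. f (p n)) has_sum suminf f) UNIV"
    using has_sum_reindex_bij_betw[OF p, of f] by simp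
  then show "(\<Sum>n. f (p n)) = (\<Sum>n. f n)"
    using has_sum_imp_sums sums_unique by metis
qed

lemma ell2_reindex: "bij p \<Longrightarrow> x \<in> ell2 \<Longrightarrow> (\<lambda>n. x (p n)) \<in> ell2"
  unfolding ell2_def using summable_norm_reindex_bij(1)[of p "\<lambda>n. (cmod (x n))\<^sup>2"] by simp

lemma summable_norm_l2inner: assumes "x \<in> ell2" "y \<in> ell2"
  shows "summable (\<lambda>n. norm (x n * cnj (y n)))"
proof (rule summable_comparison_test'[where N = 0])
  show "summable (\<lambda>n. (cmod (x n))\<^sup>2 + (cmod (y n))\<^sup>2)"
    using assms unfolding ell2_def by (intro summable_add) auto
  show "norm (norm (x n * cnj (y n))) \<le> (cmod (x n))\<^sup>2 + (cmod (y n))\<^sup>2" for n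
  proof -
    have "2 * (cmod (x n) * cmod (y n)) \<le> (cmod (x n))\<^sup>2 + (cmod (y n))\<^sup>2"
      using sum_squares_bound[of "cmod (x n)" "cmod (y n)"] by (simp add: mult.assoc)
    moreover have "0 \<le> cmod (x n) * cmod (y n)" by simp
    ultimately have "cmod (x n) * cmod (y n) \<le> (cmod (x n))\<^sup>2 + (cmod (y n))\<^sup>2" by linarith
    then show ?thesis by (simp add: norm_mult)
  qed
qed

lemma l2inner_reindex: "bij p \<Longrightarrow> x \<in> ell2 \<Longrightarrow> y \<in> ell2 \<Longrightarrow>
    l2inner (\<lambda>n. x (p n)) (\<lambda>n. y (p n)) = l2inner x y"
  unfolding l2inner_def by (rule summable_norm_reindex_bij(2)[OF _ summable_norm_l2inner])

lemma cspan_subset_ell2: assumes "finite S" "S \<subseteq> ell2" shows "cspan S \<subseteq> ell2"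
proof
  fix x assume "x \<in> cspan S"
  then obtain c where c: "x = (\<lambda>n. \<Sum>v\<in>S. c v * v n)" unfolding cspan_def by auto
  have "(\<lambda>n. \<Sum>v\<in>T. c v * v n) \<in> ell2" if "T \<subseteq> S" for T
    using finite_subset[OF that assms(1)] that
  proof (induction T rule: finite_induct)
    case empty then show ?case using ell2_zero by simp
  next
    case (insert v T)
    then have "(\<lambda>n. c v * v n) \<in> ell2" using assms(2) ell2_scale by auto
    then show ?case using insert ell2_add[of "\<lambda>n. c v * v n" "\<lambda>n. \<Sum>v\<in>T. c v * v n"] by simp
  qed
  then show "x \<in> ell2" using c by blast
qed

section \<open>Diagonally dominant families\<close>

interpretation seq: vector_space "\<lambda>(c::complex) (f::nat \<Rightarrow> complex) n. c * f n"
  by unfold_locales (auto simp: fun_eq_iff algebra_simps)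

lemma sum_fun_apply: "(\<Sum>v\<in>U. f v) (n::nat) = (\<Sum>v\<in>U. f v n)"
  for f :: "'a \<Rightarrow> nat \<Rightarrow> complex"
  by (induction U rule: infinite_finite_induct) auto

lemma cspan_subset_span: assumes "finite S" shows "cspan S \<subseteq> seq.span S"
proof
  fix x assume "x \<in> cspan S"
  then obtain c where c: "x = (\<lambda>n. \<Sum>v\<in>S. c v * v n)" unfolding cspan_def by auto
  have "x = (\<Sum>v\<in>S. (\<lambda>n. c v * v n))" unfolding c by (rule ext) (simp add: sum_fun_apply)
  also have "\<dots> \<in> seq.span S"
    by (intro seq.span_sum seq.span_scale seq.span_base)
  finally show "x \<in> seq.span S" .
qed

text \<open>At the point where the largest coefficient sits, its diagonal term would have to be
  cancelled by at most m terms, each smaller than half of it.\<close>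
lemma diagonally_dominant_combination_zero:
  fixes v :: "nat \<Rightarrow> nat \<Rightarrow> complex" and p :: "nat \<Rightarrow> nat"
  assumes J: "J \<subseteq> {..m}" and zero: "\<And>n. (\<Sum>j\<in>J. c j * v j n) = 0"
    and diag: "\<And>i. v i (p i) = a" and off: "\<And>i j. i \<le> m \<Longrightarrow> j \<le> m \<Longrightarrow> i \<noteq> j \<Longrightarrow> cmod (v j (p i)) \<le> d"
    and dominant: "2 * real (m + 1) * d \<le> cmod a" and "a \<noteq> 0" and "0 \<le> d"
  shows "\<forall>j\<in>J. c j = 0"
proof (cases "J = {}")
  case False
  have fJ: "finite J" using J finite_subset by blast
  define M where "M = Max ((\<lambda>j. cmod (c j)) ` J)"
  have "M \<in> (\<lambda>j. cmod (c j)) ` J" unfolding M_def using fJ False by (intro Max_in) auto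
  then obtain k where k: "k \<in> J" "cmod (c k) = M" by auto
  have le_M: "cmod (c j) \<le> M" if "j \<in> J" for j unfolding M_def using fJ that by simp
  have M0: "0 \<le> M" using k(2) norm_ge_zero by metis
  have "(\<Sum>j\<in>J. c j * v j (p k)) = c k * a + (\<Sum>j\<in>J - {k}. c j * v j (p k))"
    using fJ k(1) diag by (simp add: sum.remove)
  then have "c k * a = - (\<Sum>j\<in>J - {k}. c j * v j (p k))"
    using zero[of "p k"] by (simp add: eq_neg_iff_add_eq_0)
  then have "M * cmod a = cmod (- (\<Sum>j\<in>J - {k}. c j * v j (p k)))"
    using k(2) by (metis norm_mult)
  also have "\<dots> = cmod (\<Sum>j\<in>J - {k}. c j * v j (p k))"
    by (rule norm_minus_cancel)
  also have "\<dots> \<le> (\<Sum>j\<in>J - {k}. cmod (c j * v j (p k)))"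
    by (rule norm_sum)
  also have "\<dots> \<le> (\<Sum>j\<in>J - {k}. M * d)"
  proof (rule sum_mono)
    fix j assume j: "j \<in> J - {k}"
    then have "cmod (v j (p k)) \<le> d" using off[of k j] k(1) J by auto
    then have "cmod (c j) * cmod (v j (p k)) \<le> M * d"
      using le_M[of j] j \<open>0 \<le> d\<close> M0 by (intro mult_mono) simp_all
    then show "cmod (c j * v j (p k)) \<le> M * d" by (simp add: norm_mult)
  qed
  also have "\<dots> \<le> real (m + 1) * (M * d)"
  proof -
    have "card (J - {k}) \<le> card {..m}" using J by (intro card_mono) auto
    then have "real (card (J - {k})) \<le> real (m + 1)" by simp
    then show ?thesis using M0 \<open>0 \<le> d\<close> by (simp add: mult_right_mono[of _ _ "M * d"])
  qed
  also have "\<dots> = M * (real (m + 1) * d)" by (simp only: ac_simps)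
  also have "\<dots> \<le> M * (cmod a / 2)"
  proof (rule mult_left_mono[OF _ M0])
    have "2 * (real (m + 1) * d) \<le> cmod a" using dominant by (simp only: mult.assoc)
    then show "real (m + 1) * d \<le> cmod a / 2" by linarith
  qed
  finally have "M * (cmod a / 2) \<le> 0" by simp
  then have "M \<le> 0" using \<open>a \<noteq> 0\<close> by (simp add: mult_le_0_iff)
  then show ?thesis using le_M by (meson norm_le_zero_iff order_trans)
qed simp

lemma diagonally_dominant_independent:
  fixes v :: "nat \<Rightarrow> nat \<Rightarrow> complex" and p :: "nat \<Rightarrow> nat"
  assumes diag: "\<And>i. v i (p i) = a" and off: "\<And>i j. i \<le> m \<Longrightarrow> j \<le> m \<Longrightarrow> i \<noteq> j \<Longrightarrow> cmod (v j (p i)) \<le> d"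
    and dominant: "2 * real (m + 1) * d \<le> cmod a" and "a \<noteq> 0" and "0 \<le> d"
  shows "inj_on v {..m}" and "\<not> seq.dependent (v ` {..m})"
proof -
  have "d < cmod a"
  proof (cases "d = 0")
    case False
    then have "0 < (1 + 2 * real m) * d" using \<open>0 \<le> d\<close> by simp
    moreover have "2 * real (m + 1) * d = d + (1 + 2 * real m) * d" by (simp add: algebra_simps)
    ultimately show ?thesis using dominant by linarith
  qed (use \<open>a \<noteq> 0\<close> in simp)
  show inj: "inj_on v {..m}"
  proof (rule inj_onI)
    fix i j assume ij: "i \<in> {..m}" "j \<in> {..m}" "v i = v j"
    show "i = j"
    proof (rule ccontr)
      assume "i \<noteq> j"
      then have "cmod (v j (p i)) \<le> d" using off ij(1,2) by simp
      then show False using ij(3) diag[of i] \<open>d < cmod a\<close> by simp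
    qed
  qed
  show "\<not> seq.dependent (v ` {..m})"
    unfolding seq.independent_explicit_finite_subsets
  proof (intro allI impI ballI)
    fix U u w assume U: "U \<subseteq> v ` {..m}" "finite U" and sum: "(\<Sum>x\<in>U. (\<lambda>n. u x * x n)) = 0"
      and "w \<in> U"
    define J where "J = {j \<in> {..m}. v j \<in> U}"
    have UJ: "U = v ` J" using U(1) unfolding J_def by blast
    have injJ: "inj_on v J" using inj unfolding J_def by (rule inj_on_subset) auto
    have "(\<Sum>j\<in>J. u (v j) * v j n) = 0" for n
    proof -
      have "(\<Sum>x\<in>U. u x * x n) = 0" using fun_cong[OF sum, of n] by (simp add: sum_fun_apply)
      then show ?thesis unfolding UJ sum.reindex[OF injJ] by simp
    qed
    moreover have "J \<subseteq> {..m}" unfolding J_def by blast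
    ultimately have "\<forall>j\<in>J. u (v j) = 0"
      using diagonally_dominant_combination_zero[of J m "\<lambda>j. u (v j)" v p a d]
        diag off dominant \<open>a \<noteq> 0\<close> \<open>0 \<le> d\<close> by blast
    then show "u w = 0" using \<open>w \<in> U\<close> UJ by auto
  qed
qed

text \<open>Translates of w by large powers of the reindexing p are nearly disjointly supported
  on the orbit, hence linearly independent; there are more of them than the dimension.\<close>
lemma finite_invariant_cspan_vanishes_on_orbit:
  fixes p :: "nat \<Rightarrow> nat" and orb :: "int \<Rightarrow> nat"
  assumes S: "finite S" "S \<subseteq> ell2"
    and invariant: "\<And>x. x \<in> cspan S \<Longrightarrow> (\<lambda>n. x (p n)) \<in> cspan S"
    and orb: "inj orb" "\<And>c. p (orb c) = orb (c + 1)"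
    and w: "w \<in> cspan S"
  shows "w (orb 0) = 0"
proof (rule ccontr)
  define a where "a = w (orb 0)"
  define m where "m = card S"
  define d where "d = cmod a / (2 * real (m + 1))"
  assume "w (orb 0) \<noteq> 0"
  then have "a \<noteq> 0" and d0: "0 < d" unfolding a_def d_def by auto
  have "finite (orb -` {n. d \<le> cmod (w n)})"
    using ell2_finite_large_coords[OF _ d0] cspan_subset_ell2[OF S] w orb(1)
    by (intro finite_vimageI) auto
  then obtain D where D: "\<And>c. d \<le> cmod (w (orb c)) \<Longrightarrow> \<bar>c\<bar> < D"
    unfolding finite_int_iff_bounded by auto
  define P where "P x = (\<lambda>n. x (p n))" for x :: "nat \<Rightarrow> complex"
  have P_pow_orb: "(P ^^ k) w (orb c) = w (orb (c + int k))" for k c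
    by (induction k arbitrary: c) (simp_all add: P_def orb(2) ac_simps)
  define v where "v j = (P ^^ (j * nat D)) w" for j
  define pt where "pt i = orb (- int (i * nat D))" for i
  have "d \<le> cmod (w (orb 0))"
    unfolding d_def a_def using mult_left_mono[of 1 "2 + 2 * real m" "cmod (w (orb 0))"]
    by (simp add: divide_le_eq)
  then have D0: "0 < D" using D[of 0] by simp
  have v_pt: "v j (pt i) = w (orb ((int j - int i) * D))" for i j
    unfolding v_def pt_def P_pow_orb using D0 by (simp add: algebra_simps)
  have diag: "v i (pt i) = a" for i unfolding v_pt a_def by simp
  have off: "cmod (v j (pt i)) \<le> d" if "i \<le> m" "j \<le> m" "i \<noteq> j" for i j
  proof -
    have "D \<le> \<bar>(int j - int i) * D\<bar>" using that(3) D0 by (simp add: abs_mult)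
    then show ?thesis unfolding v_pt using D[of "(int j - int i) * D"] by linarith
  qed
  have "(P ^^ k) w \<in> cspan S" for k
    by (induction k) (simp_all add: w P_def invariant)
  then have span: "v ` {..m} \<subseteq> seq.span S"
    using cspan_subset_span[OF S(1)] unfolding v_def by blast
  have "2 * real (m + 1) * d \<le> cmod a" unfolding d_def by simp
  note independent = diagonally_dominant_independent[of v pt a m d, OF diag off this \<open>a \<noteq> 0\<close>]
  have "card (v ` {..m}) \<le> card S"
    using seq.independent_span_bound[OF S(1) independent(2) span] d0 by simp
  moreover have "card (v ` {..m}) = m + 1"
    using card_image[OF independent(1)] d0 by simp
  ultimately show False unfolding m_def by simp
qed

section \<open>Permutation representations and cocycles\<close>

definition perm_op :: "(nat \<Rightarrow> nat) \<Rightarrow> (nat \<Rightarrow> complex) \<Rightarrow> (nat \<Rightarrow> complex)" where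
  "perm_op p x = (\<lambda>n. x (p n))"

lemma unitary_op_perm_op:
  assumes "bij p" shows "unitary_op (perm_op p)"
proof -
  have "perm_op p ` ell2 \<subseteq> ell2"
    using ell2_reindex[OF assms] unfolding perm_op_def by blast
  moreover have "ell2 \<subseteq> perm_op p ` ell2"
  proof
    fix x assume "x \<in> ell2"
    then have "perm_op (inv_into UNIV p) x \<in> ell2" and "perm_op p (perm_op (inv_into UNIV p) x) = x"
      using ell2_reindex[OF bij_imp_bij_inv[OF assms]] inv_f_f[OF bij_is_inj[OF assms]]
      unfolding perm_op_def by auto
    then show "x \<in> perm_op p ` ell2" by (metis image_eqI)
  qed
  ultimately show ?thesis
    unfolding unitary_op_def using l2inner_reindex[OF assms]
    by (auto simp: perm_op_def vadd_def vscale_def)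
qed

lemma (in group) unitary_rep_perm_op:
  assumes mult: "\<And>g h. g \<in> carrier G \<Longrightarrow> h \<in> carrier G \<Longrightarrow> \<sigma> (g \<otimes> h) = \<sigma> h \<circ> \<sigma> g"
    and one: "\<sigma> \<one> = id"
  shows "unitary_rep G (\<lambda>g. perm_op (\<sigma> g))"
proof -
  have "bij (\<sigma> g)" if "g \<in> carrier G" for g
  proof (rule o_bij)
    show "\<sigma> g \<circ> \<sigma> (inv g) = id" using mult[of "inv g" g] that one by simp
    show "\<sigma> (inv g) \<circ> \<sigma> g = id" using mult[of g "inv g"] that one by simp
  qed
  then show ?thesis
    unfolding unitary_rep_def using unitary_op_perm_op mult one by (simp add: perm_op_def)
qed

text \<open>Formally the coboundary of f, which need not be square summable, plus the homomorphism
  \<beta> to the integers.\<close>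
definition height_cocycle ::
    "('a \<Rightarrow> nat \<Rightarrow> nat) \<Rightarrow> (nat \<Rightarrow> int) \<Rightarrow> ('a \<Rightarrow> int) \<Rightarrow> 'a \<Rightarrow> nat \<Rightarrow> complex" where
  "height_cocycle \<sigma> f \<beta> g = (\<lambda>n. of_int (f (\<sigma> g n) - f n + \<beta> g))"

lemma (in group) subgroup_ell2_values:
  assumes "unitary_rep G \<pi>"
    and mult: "\<And>g h. g \<in> carrier G \<Longrightarrow> h \<in> carrier G \<Longrightarrow> b (g \<otimes> h) = vadd (b g) (\<pi> g (b h))"
    and "b \<one> \<in> ell2"
  shows "subgroup {g \<in> carrier G. b g \<in> ell2} G"
proof -
  have \<pi>_ell2: "\<pi> g x \<in> ell2" if "g \<in> carrier G" "x \<in> ell2" for g x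
    using assms(1) that unfolding unitary_rep_def unitary_op_def by blast
  show ?thesis
  proof
    fix g assume g: "g \<in> {g \<in> carrier G. b g \<in> ell2}"
    have "b \<one> = vadd (b (inv g)) (\<pi> (inv g) (b g))"
      using mult[of "inv g" g] g by simp
    then have "b (inv g) = vsub (b \<one>) (\<pi> (inv g) (b g))"
      by (simp add: vadd_def vsub_def fun_eq_iff)
    then show "inv g \<in> {g \<in> carrier G. b g \<in> ell2}"
      using g \<pi>_ell2 ell2_diff[OF \<open>b \<one> \<in> ell2\<close>] by (simp add: vsub_def)
  qed (use assms \<pi>_ell2 ell2_add in \<open>auto simp: vadd_def\<close>)
qed

lemma (in group) carrier_subgroup_generated_subset_subgroup:
  assumes "subgroup H (subgroup_generated G A)" and "carrier G \<inter> A \<subseteq> H"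
  shows "carrier (subgroup_generated G A) \<subseteq> H"
proof -
  have "subgroup H G" using assms(1) subgroup_subgroup_generated_iff by blast
  then have "carrier (subgroup_generated G (carrier G \<inter> A)) \<subseteq> H"
    using assms(2) by (rule subgroup_generated_minimal)
  then show ?thesis by (simp add: carrier_subgroup_generated)
qed

text \<open>A coboundary vanishes at every coordinate fixed by \<pi> g, so b g n bounds the distance
  of b g from all of them.\<close>
lemma not_in_closure_coboundaries_at_fixed_coordinate:
  assumes "g \<in> carrier G" and "b g \<in> ell2" and "b g n \<noteq> 0"
    and fixed: "\<And>\<xi>. \<xi> \<in> ell2 \<Longrightarrow> \<pi> g \<xi> \<in> ell2 \<and> \<pi> g \<xi> n = \<xi> n"
  shows "\<not> in_closure_coboundaries G \<pi> b"
proof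
  assume "in_closure_coboundaries G \<pi> b"
  then obtain \<xi> where "\<xi> \<in> ell2" and close: "l2norm (vsub (b g) (vsub (\<pi> g \<xi>) \<xi>)) < cmod (b g n)"
    using assms(1,3) unfolding in_closure_coboundaries_def by (metis empty_subsetI
        finite.emptyI finite.insertI insert_subset insertI1 zero_less_norm_iff)
  then have "vsub (b g) (vsub (\<pi> g \<xi>) \<xi>) \<in> ell2"
    using assms(2) fixed unfolding vsub_def by (simp add: ell2_diff)
  from norm_le_l2norm[OF this, of n] show False
    using close fixed[OF \<open>\<xi> \<in> ell2\<close>] by (simp add: vsub_def)
qed

section \<open>Geodesic lines through the fixed end\<close>

definition digit_seqs :: "nat \<Rightarrow> (int \<Rightarrow> nat) set" where
  "digit_seqs q = {y. (\<forall>k. y k < q) \<and> finite {k. y k \<noteq> 0}}"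

definition line_vertex :: "(int \<Rightarrow> nat) \<Rightarrow> int \<Rightarrow> vert" where
  "line_vertex y n = (n, \<lambda>k. if k < n then y k else 0)"

definition geodesic_line :: "(int \<Rightarrow> nat) \<Rightarrow> vert set" where
  "geodesic_line y = range (line_vertex y)"

definition lines :: "nat \<Rightarrow> vert set set" where
  "lines q = geodesic_line ` digit_seqs q"

definition shift_digits :: "int \<Rightarrow> (int \<Rightarrow> nat) \<Rightarrow> (int \<Rightarrow> nat)" where
  "shift_digits d y = (\<lambda>k. y (k + d))"

definition perm_digit0 :: "(nat \<Rightarrow> nat) \<Rightarrow> (int \<Rightarrow> nat) \<Rightarrow> (int \<Rightarrow> nat)" where
  "perm_digit0 p y = (if \<forall>k<0. y k = 0 then y(0 := p (y 0)) else y)"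

definition top_digit :: "(int \<Rightarrow> nat) \<Rightarrow> int" where
  "top_digit y = (if {k. y k \<noteq> 0} = {} then 0 else Max {k. y k \<noteq> 0})"

lemma top_digit_eq_Max: "{k. y k \<noteq> 0} \<noteq> {} \<Longrightarrow> top_digit y = Max {k. y k \<noteq> 0}"
  unfolding top_digit_def by (rule if_not_P)

lemma line_vertex_in_tree_V:
  assumes "y \<in> digit_seqs q" shows "line_vertex y n \<in> tree_V q"
proof -
  have "finite {k. y k \<noteq> 0}" and q: "\<forall>k. y k < q" using assms by (auto simp: digit_seqs_def)
  then obtain K where K: "\<And>k. y k \<noteq> 0 \<Longrightarrow> \<bar>k\<bar> < K"
    unfolding finite_int_iff_bounded by auto
  have "\<forall>k < - K. y k = 0"
  proof (intro allI impI)
    fix k :: int assume "k < - K"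
    show "y k = 0"
    proof (rule ccontr)
      assume "y k \<noteq> 0"
      then have "\<bar>k\<bar> < K" by (rule K)
      then show False using \<open>k < - K\<close> by arith
    qed
  qed
  moreover have "0 < q" using q[rule_format, of 0] by linarith
  ultimately show ?thesis
    using q unfolding line_vertex_def tree_V_def by (auto intro!: exI[of _ "- K"])
qed

lemma geodesic_line_subset: "y \<in> digit_seqs q \<Longrightarrow> geodesic_line y \<subseteq> tree_V q"
  unfolding geodesic_line_def using line_vertex_in_tree_V by blast

lemma lines_subset: "A \<in> lines q \<Longrightarrow> A \<subseteq> tree_V q"
  unfolding lines_def using geodesic_line_subset by blast

lemma inj_geodesic_line: "inj geodesic_line"
proof (rule injI)
  fix y y' assume eq: "geodesic_line y = geodesic_line y'"
  show "y = y'"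
  proof
    fix k
    have "line_vertex y (k + 1) \<in> geodesic_line y'" using eq unfolding geodesic_line_def by auto
    then obtain n where "line_vertex y (k + 1) = line_vertex y' n" unfolding geodesic_line_def by auto
    then show "y k = y' k" unfolding line_vertex_def by (auto dest: fun_cong[of _ _ k])
  qed
qed

lemma shift_digits_in_digit_seqs:
  assumes "y \<in> digit_seqs q" shows "shift_digits d y \<in> digit_seqs q"
proof -
  have "{k. shift_digits d y k \<noteq> 0} = (\<lambda>k. k - d) ` {k. y k \<noteq> 0}"
    unfolding shift_digits_def by (auto simp: image_iff intro!: exI[of _ "_ + d"])
  moreover have "finite {k. y k \<noteq> 0}" and "\<forall>k. y k < q"
    using assms unfolding digit_seqs_def by auto
  ultimately show ?thesis unfolding digit_seqs_def by (simp add: shift_digits_def)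
qed

lemma shift_digits_shift_digits [simp]: "shift_digits a (shift_digits b y) = shift_digits (a + b) y"
  unfolding shift_digits_def by (simp add: ac_simps)

lemma shift_digits_0 [simp]: "shift_digits 0 y = y"
  unfolding shift_digits_def by simp

lemma shift_digits_zero [simp]: "shift_digits d (\<lambda>_. 0) = (\<lambda>_. 0)"
  unfolding shift_digits_def by simp

lemma perm_digit0_in_digit_seqs:
  assumes "y \<in> digit_seqs q" and "\<forall>a<q. p a < q" shows "perm_digit0 p y \<in> digit_seqs q"
proof -
  have "{k. perm_digit0 p y k \<noteq> 0} \<subseteq> insert 0 {k. y k \<noteq> 0}" unfolding perm_digit0_def by auto
  moreover have "finite {k. y k \<noteq> 0}" and y: "\<forall>k. y k < q"
    using assms(1) unfolding digit_seqs_def by auto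
  ultimately have "finite {k. perm_digit0 p y k \<noteq> 0}" by (meson finite_insert finite_subset)
  moreover have "perm_digit0 p y k < q" for k
    using y assms(2) unfolding perm_digit0_def by simp
  ultimately show ?thesis unfolding digit_seqs_def by blast
qed

lemma perm_digit0_inverse:
  assumes "bij_betw p {..<q} {..<q}" and "y \<in> digit_seqs q"
  shows "perm_digit0 p (perm_digit0 (inv_into {..<q} p) y) = y"
proof (cases "\<forall>k<0. y k = 0")
  case True
  have "y 0 < q" using assms(2) unfolding digit_seqs_def by auto
  then have "p (inv_into {..<q} p (y 0)) = y 0"
    using assms(1) by (simp add: bij_betw_def f_inv_into_f)
  moreover have "\<forall>k<0. (y(0 := inv_into {..<q} p (y 0))) k = 0" using True by simp
  ultimately show ?thesis using True unfolding perm_digit0_def by (simp add: fun_eq_iff)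
next
  case False
  then have "perm_digit0 r y = y" for r unfolding perm_digit0_def by (rule if_not_P)
  then show ?thesis by simp
qed

lemma image_restrict_subset: "B \<subseteq> A \<Longrightarrow> restrict f A ` B = f ` B"
  by (rule image_cong[OF refl]) auto

lemma shift_t_geodesic_line:
  assumes "y \<in> digit_seqs q"
  shows "restrict shift_t (tree_V q) ` geodesic_line y = geodesic_line (shift_digits (-1) y)"
proof -
  have "shift_t (line_vertex y n) = line_vertex (shift_digits (-1) y) (n + 1)" for n
    unfolding shift_t_def line_vertex_def shift_digits_def by (auto simp: fun_eq_iff)
  then have "shift_t ` geodesic_line y = geodesic_line (shift_digits (-1) y)"
    unfolding geodesic_line_def by (auto simp: image_iff) (metis diff_add_cancel)
  then show ?thesis by (simp only: image_restrict_subset[OF geodesic_line_subset[OF assms]])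
qed

lemma perm_below_v_geodesic_line:
  assumes "y \<in> digit_seqs q"
  shows "restrict (perm_below_v q p) (tree_V q) ` geodesic_line y = geodesic_line (perm_digit0 p y)"
proof -
  have "perm_below_v q p (line_vertex y n) = line_vertex (perm_digit0 p y) n" for n
  proof -
    have "(\<exists>a<q. line_vertex y n \<in> subtree_below_v q a) \<longleftrightarrow> 1 \<le> n \<and> (\<forall>k<0. y k = 0)"
      using line_vertex_in_tree_V[OF assms, of n] assms
      unfolding subtree_below_v_def line_vertex_def digit_seqs_def by auto
    then show ?thesis
      unfolding perm_below_v_def by (auto simp: line_vertex_def perm_digit0_def fun_eq_iff)
  qed
  then have "perm_below_v q p ` geodesic_line y = geodesic_line (perm_digit0 p y)"
    unfolding geodesic_line_def by (auto simp: image_iff)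
  then show ?thesis by (simp only: image_restrict_subset[OF geodesic_line_subset[OF assms]])
qed

lemma countable_lines: "countable (lines q)"
proof -
  let ?graph = "\<lambda>y. (\<lambda>k. (k, y k)) ` {k. y k \<noteq> 0}"
  have "?graph ` digit_seqs q \<subseteq> Collect finite"
    unfolding digit_seqs_def by auto
  then have "countable (?graph ` digit_seqs q)"
    by (rule countable_subset[OF _ countable_Collect_finite])
  moreover have "inj_on ?graph (digit_seqs q)"
  proof (rule inj_onI, rule ext, rule ccontr)
    fix y y' k assume eq: "?graph y = ?graph y'" and ne: "y k \<noteq> y' k"
    consider "y k \<noteq> 0" | "y' k \<noteq> 0" using ne by force
    then show False
    proof cases
      case 1
      then have "(k, y k) \<in> ?graph y'" unfolding eq[symmetric] by blast
      then show False using ne by auto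
    next
      case 2
      then have "(k, y' k) \<in> ?graph y" unfolding eq by blast
      then show False using ne by auto
    qed
  qed
  ultimately have "countable (digit_seqs q)" by (rule countable_image_inj_on)
  then show ?thesis unfolding lines_def by (rule countable_image)
qed

lemma infinite_lines: assumes "2 \<le> q" shows "infinite (lines q)"
proof -
  define e where "e n = (\<lambda>k::int. if k = int n then 1::nat else 0)" for n :: nat
  have "inj e" unfolding e_def inj_def by (metis of_nat_eq_iff zero_neq_one)
  then have "infinite (range e)" by (rule range_inj_infinite)
  moreover have "range e \<subseteq> digit_seqs q" unfolding e_def digit_seqs_def using assms by auto
  ultimately have "infinite (digit_seqs q)" by (rule infinite_super[rotated])
  then show ?thesis
    unfolding lines_def using finite_image_iff[OF inj_on_subset[OF inj_geodesic_line]] by blast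
qed

lemma top_digit_shift_digits:
  assumes "y \<in> digit_seqs q" and "y \<noteq> (\<lambda>_. 0)"
  shows "top_digit (shift_digits d y) = top_digit y - d"
proof -
  have fin: "finite {k. y k \<noteq> 0}" and ne: "{k. y k \<noteq> 0} \<noteq> {}"
    using assms by (auto simp: digit_seqs_def fun_eq_iff)
  have supp: "{k. shift_digits d y k \<noteq> 0} = (\<lambda>k. k - d) ` {k. y k \<noteq> 0}"
    unfolding shift_digits_def by (auto simp: image_iff intro!: exI[of _ "_ + d"])
  then have "top_digit (shift_digits d y) = Max ((\<lambda>k. k - d) ` {k. y k \<noteq> 0})"
    using ne by (simp add: top_digit_eq_Max)
  also have "\<dots> = Max {k. y k \<noteq> 0} - d"
    using mono_Max_commute[OF _ fin ne, of "\<lambda>k. k - d"] by (simp add: mono_def)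
  also have "\<dots> = top_digit y - d"
    using ne by (simp add: top_digit_eq_Max)
  finally show ?thesis .
qed

lemma top_digit_update_0:
  assumes fin: "finite {k. y k \<noteq> 0}" and "y k \<noteq> 0" and "0 < k"
  shows "top_digit (y(0 := a)) = top_digit y"
proof -
  define S where "S = {k. y k \<noteq> 0}"
  define S' where "S' = {k. (y(0 := a)) k \<noteq> 0}"
  have fin': "finite S'" unfolding S'_def
    by (rule finite_subset[of _ "insert 0 {k. y k \<noteq> 0}"]) (use fin in auto)
  have "k \<in> S" "k \<in> S'" using assms(2,3) unfolding S_def S'_def by auto
  then have ne: "S \<noteq> {}" "S' \<noteq> {}" and "k \<le> Max S" "k \<le> Max S'"
    using Max_ge[OF fin[folded S_def]] Max_ge[OF fin'] by auto
  then have "Max S \<in> S'" "Max S' \<in> S"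
    using Max_in[OF fin[folded S_def] ne(1)] Max_in[OF fin' ne(2)] assms(3)
    unfolding S_def S'_def by auto
  then have "Max S = Max S'"
    using Max_ge[OF fin[folded S_def]] Max_ge[OF fin'] by (meson antisym)
  then show ?thesis using ne top_digit_eq_Max unfolding S_def S'_def by metis
qed

section \<open>Automorphisms permuting the lines\<close>

definition line_preserving :: "nat \<Rightarrow> (vert \<Rightarrow> vert) set" where
  "line_preserving q = {g \<in> Bij (tree_V q). (\<exists>c. \<forall>x\<in>tree_V q. fst (g x) = fst x + c) \<and>
     image g ` lines q = lines q}"

lemma image_compose: assumes "A \<subseteq> S" shows "compose S g h ` A = g ` h ` A"
  unfolding compose_def image_restrict_subset[OF assms] by (simp only: image_image)

lemma image_restrict_inv_into_image:
  assumes "g \<in> Bij S" and "A \<subseteq> S" shows "restrict (inv_into S g) S ` g ` A = A"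
proof -
  have "inj_on g S" and "g ` S = S" using assms(1) unfolding Bij_def bij_betw_def by auto
  then have "restrict (inv_into S g) S (g a) = a" if "a \<in> A" for a
    using assms(2) that by (auto simp: inv_into_f_f)
  then have "(\<lambda>a. restrict (inv_into S g) S (g a)) ` A = (\<lambda>a. a) ` A"
    by (rule image_cong[OF refl])
  then show ?thesis unfolding image_image image_ident .
qed

lemma image_lines_eq:
  assumes "\<And>y. y \<in> digit_seqs q \<Longrightarrow> g ` geodesic_line y = geodesic_line (\<tau> y)"
    and "\<tau> ` digit_seqs q = digit_seqs q"
  shows "image g ` lines q = lines q"
proof -
  have "image g ` lines q = (\<lambda>y. g ` geodesic_line y) ` digit_seqs q"
    unfolding lines_def by (simp only: image_image)
  also have "\<dots> = (\<lambda>y. geodesic_line (\<tau> y)) ` digit_seqs q"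
    using assms(1) by (rule image_cong[OF refl])
  also have "\<dots> = geodesic_line ` \<tau> ` digit_seqs q"
    by (simp only: image_image)
  finally show ?thesis unfolding assms(2) lines_def .
qed

lemma line_preservingI:
  assumes "g \<in> Bij (tree_V q)" and "\<And>x. x \<in> tree_V q \<Longrightarrow> fst (g x) = fst x + c"
    and "image g ` lines q = lines q"
  shows "g \<in> line_preserving q"
  using assms unfolding line_preserving_def by blast

lemma subgroup_line_preserving: "subgroup (line_preserving q) (BijGroup (tree_V q))"
proof (rule group.subgroupI[OF group_BijGroup])
  let ?V = "tree_V q"
  show "line_preserving q \<subseteq> carrier (BijGroup ?V)"
    unfolding line_preserving_def BijGroup_def by auto
  have "(\<lambda>x\<in>?V. x) ` A = A" if "A \<in> lines q" for A
    by (simp only: image_restrict_subset[OF lines_subset[OF that]] image_ident)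
  then have "image (\<lambda>x\<in>?V. x) ` lines q = (\<lambda>A. A) ` lines q" by (rule image_cong[OF refl])
  then have image_id: "image (\<lambda>x\<in>?V. x) ` lines q = lines q" by (simp only: image_ident)
  have "fst ((\<lambda>x\<in>?V. x) x) = fst x + 0" if "x \<in> ?V" for x using that by simp
  from line_preservingI[OF id_Bij this image_id]
  have "(\<lambda>x\<in>?V. x) \<in> line_preserving q" .
  then show "line_preserving q \<noteq> {}" by blast
next
  let ?V = "tree_V q"
  fix g assume "g \<in> line_preserving q"
  then obtain c where gB: "g \<in> Bij ?V" and c: "\<And>x. x \<in> ?V \<Longrightarrow> fst (g x) = fst x + c"
    and lines: "image g ` lines q = lines q" unfolding line_preserving_def by blast
  let ?g' = "restrict (inv_into ?V g) ?V"
  have "fst (?g' x) = fst x + - c" if "x \<in> ?V" for x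
  proof -
    have "x \<in> g ` ?V" using gB that unfolding Bij_def bij_betw_def by simp
    then have "inv_into ?V g x \<in> ?V" "g (inv_into ?V g x) = x"
      by (rule inv_into_into, rule f_inv_into_f)
    then show ?thesis using c[of "inv_into ?V g x"] that by simp
  qed
  moreover have "image ?g' ` lines q = lines q"
  proof -
    have "image ?g' ` image g ` lines q = (image ?g' \<circ> image g) ` lines q"
      by (rule image_comp)
    also have "\<dots> = (\<lambda>A. A) ` lines q"
      unfolding comp_def by (rule image_cong[OF refl image_restrict_inv_into_image[OF gB lines_subset]])
    finally show ?thesis unfolding lines by simp
  qed
  ultimately have "?g' \<in> line_preserving q"
    by (rule line_preservingI[OF restrict_inv_into_Bij[OF gB]])
  then show "inv\<^bsub>BijGroup ?V\<^esub> g \<in> line_preserving q"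
    by (simp only: inv_BijGroup[OF gB])
next
  let ?V = "tree_V q"
  fix g h assume "g \<in> line_preserving q" "h \<in> line_preserving q"
  from \<open>g \<in> line_preserving q\<close> obtain c where gB: "g \<in> Bij ?V"
    and c: "\<And>x. x \<in> ?V \<Longrightarrow> fst (g x) = fst x + c" and lg: "image g ` lines q = lines q"
    unfolding line_preserving_def by blast
  from \<open>h \<in> line_preserving q\<close> obtain d where hB: "h \<in> Bij ?V"
    and d: "\<And>x. x \<in> ?V \<Longrightarrow> fst (h x) = fst x + d" and lh: "image h ` lines q = lines q"
    unfolding line_preserving_def by blast
  have "h x \<in> ?V" if "x \<in> ?V" for x using hB that unfolding Bij_def bij_betw_def by auto
  then have "fst (compose ?V g h x) = fst x + (d + c)" if "x \<in> ?V" for x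
    using c d that unfolding compose_def by auto
  moreover have "image (compose ?V g h) ` lines q = lines q"
  proof -
    have "image (compose ?V g h) ` lines q = (image g \<circ> image h) ` lines q"
      unfolding comp_def by (rule image_cong[OF refl image_compose[OF lines_subset]])
    also have "\<dots> = image g ` image h ` lines q" by (rule image_comp[symmetric])
    finally show ?thesis using lg lh by simp
  qed
  ultimately have "compose ?V g h \<in> line_preserving q"
    by (rule line_preservingI[OF compose_Bij[OF gB hB]])
  then show "g \<otimes>\<^bsub>BijGroup ?V\<^esub> h \<in> line_preserving q"
    using gB hB by (simp add: BijGroup_def)
qed

lemma shift_t_Bij: "restrict shift_t (tree_V q) \<in> Bij (tree_V q)"
proof -
  define unshift :: "vert \<Rightarrow> vert" where "unshift x = (fst x - 1, \<lambda>k. snd x (k + 1))" for x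
  have closed: "(\<lambda>(n, y). (n + e, \<lambda>k. y (k - e))) x \<in> tree_V q" if V: "x \<in> tree_V q" for x e
  proof -
    obtain n y where x: "x = (n, y)" by (cases x)
    then obtain N where "\<forall>k<N. y k = 0" using V unfolding tree_V_def by auto
    then show ?thesis using x V unfolding tree_V_def by (auto intro!: exI[of _ "N + e"])
  qed
  have "bij_betw shift_t (tree_V q) (tree_V q)"
  proof (rule bij_betw_byWitness[where f' = unshift])
    show "shift_t ` tree_V q \<subseteq> tree_V q" using closed[of _ 1] by (auto simp: shift_t_def split_beta)
    show "unshift ` tree_V q \<subseteq> tree_V q" using closed[of _ "-1"] by (auto simp: unshift_def split_beta)
  qed (simp_all add: shift_t_def unshift_def)
  then show ?thesis unfolding Bij_def by (simp add: bij_betw_restrict_eq)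
qed

lemma perm_below_v_in_tree_V:
  assumes "\<forall>a<q. p a < q" and "x \<in> tree_V q"
  shows "perm_below_v q p x \<in> tree_V q"
proof (cases "\<exists>a<q. x \<in> subtree_below_v q a")
  case True
  obtain n y N where xy: "x = (n, y)" and N: "\<forall>k<N. y k = 0" using assms(2) unfolding tree_V_def by auto
  then have "\<forall>k<min N 0. (y(0 := p (y 0))) k = 0" by auto
  then show ?thesis using True assms xy unfolding perm_below_v_def tree_V_def subtree_below_v_def
    by (auto intro!: exI[of _ "min N 0"])
next
  case False
  show ?thesis unfolding perm_below_v_def if_not_P[OF False] by (rule assms(2))
qed

lemma perm_below_v_inverse:
  assumes "\<forall>a<q. p a < q" and "\<forall>a<q. p' (p a) = a" and "x \<in> tree_V q"
  shows "perm_below_v q p' (perm_below_v q p x) = x"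
proof (cases "\<exists>a<q. x \<in> subtree_below_v q a")
  case True
  obtain n y where xy: "x = (n, y)" by (cases x)
  then have "perm_below_v q p x = (n, y(0 := p (y 0)))" using True unfolding perm_below_v_def by auto
  moreover have "(n, y(0 := p (y 0))) \<in> subtree_below_v q (p (y 0))"
    using True xy perm_below_v_in_tree_V[OF assms(1,3)] calculation
    unfolding subtree_below_v_def by auto
  ultimately show ?thesis using xy assms unfolding perm_below_v_def tree_V_def
    by (auto simp: fun_eq_iff)
next
  case False
  then have "perm_below_v q r x = x" for r unfolding perm_below_v_def by (rule if_not_P)
  then show ?thesis by simp
qed

lemma perm_below_v_Bij:
  assumes "bij_betw p {..<q} {..<q}"
  shows "restrict (perm_below_v q p) (tree_V q) \<in> Bij (tree_V q)"
proof -
  define p' where "p' = inv_into {..<q} p"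
  have "\<forall>a<q. p a < q" "\<forall>a<q. p' (p a) = a" "\<forall>a<q. p (p' a) = a"
    using assms unfolding p'_def bij_betw_def by (auto simp: f_inv_into_f[where f = p])
  moreover have "\<forall>a<q. p' a < q"
    using assms unfolding p'_def by (metis bij_betw_def inv_into_into lessThan_iff)
  ultimately have "bij_betw (perm_below_v q p) (tree_V q) (tree_V q)"
    by (intro bij_betw_byWitness[where f' = "perm_below_v q p'"])
      (auto simp: perm_below_v_in_tree_V perm_below_v_inverse)
  then show ?thesis unfolding Bij_def by (simp add: bij_betw_restrict_eq)
qed

lemma shift_t_line_preserving: "restrict shift_t (tree_V q) \<in> line_preserving q"
proof -
  have "shift_digits (-1) ` digit_seqs q = digit_seqs q"
  proof
    show "shift_digits (-1) ` digit_seqs q \<subseteq> digit_seqs q"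
      using shift_digits_in_digit_seqs by blast
    show "digit_seqs q \<subseteq> shift_digits (-1) ` digit_seqs q"
    proof
      fix y assume "y \<in> digit_seqs q"
      then show "y \<in> shift_digits (-1) ` digit_seqs q"
        using shift_digits_in_digit_seqs[of y q 1] by (force intro: image_eqI[of _ _ "shift_digits 1 y"])
    qed
  qed
  then have "image (restrict shift_t (tree_V q)) ` lines q = lines q"
    using image_lines_eq[of q "restrict shift_t (tree_V q)" "shift_digits (-1)"] shift_t_geodesic_line
    by blast
  then show ?thesis
    by (intro line_preservingI[OF shift_t_Bij, where c = 1]) (simp_all add: shift_t_def)
qed

lemma perm_below_v_line_preserving:
  assumes "bij_betw p {..<q} {..<q}"
  shows "restrict (perm_below_v q p) (tree_V q) \<in> line_preserving q"
proof -
  have "perm_digit0 p ` digit_seqs q = digit_seqs q"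
  proof
    show "perm_digit0 p ` digit_seqs q \<subseteq> digit_seqs q"
      using assms perm_digit0_in_digit_seqs by (auto dest: bij_betwE)
    have "\<forall>a<q. inv_into {..<q} p a < q"
      using assms by (metis bij_betw_def inv_into_into lessThan_iff)
    then show "digit_seqs q \<subseteq> perm_digit0 p ` digit_seqs q"
      using perm_digit0_inverse[OF assms] perm_digit0_in_digit_seqs
      by (intro subsetI) (rule image_eqI, (rule sym, assumption)?, auto)
  qed
  then have "image (restrict (perm_below_v q p) (tree_V q)) ` lines q = lines q"
    using image_lines_eq[of q "restrict (perm_below_v q p) (tree_V q)" "perm_digit0 p"]
      perm_below_v_geodesic_line by blast
  then show ?thesis
    by (intro line_preservingI[OF perm_below_v_Bij[OF assms], where c = 0]) (simp_all add: perm_below_v_def)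
qed

lemma DA_subset_line_preserving:
  assumes "\<And>g. g \<in> carrier F \<Longrightarrow> bij_betw (\<phi> g) {..<q} {..<q}"
  shows "carrier (DA q F \<phi>) \<subseteq> line_preserving q"
proof -
  have "insert (restrict shift_t (tree_V q)) ((\<lambda>g. restrict (perm_below_v q (\<phi> g)) (tree_V q)) ` carrier F)
      \<subseteq> line_preserving q"
    using shift_t_line_preserving perm_below_v_line_preserving assms by blast
  then show ?thesis
    unfolding DA_def by (rule group.subgroup_generated_minimal[OF group_BijGroup subgroup_line_preserving])
qed

section \<open>The cocycle on the lines\<close>

definition level_shift :: "(vert \<Rightarrow> vert) \<Rightarrow> int" where
  "level_shift g = fst (g tree_v)"

lemma tree_v_in_tree_V: "0 < q \<Longrightarrow> tree_v \<in> tree_V q"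
  unfolding tree_v_def tree_ray_def tree_V_def by auto

lemma fst_line_preserving:
  assumes "g \<in> line_preserving q" and "0 < q" and "x \<in> tree_V q"
  shows "fst (g x) = fst x + level_shift g"
proof -
  obtain c where c: "\<forall>x\<in>tree_V q. fst (g x) = fst x + c"
    using assms(1) unfolding line_preserving_def by blast
  then have "level_shift g = c"
    unfolding level_shift_def using tree_v_in_tree_V[OF assms(2)] by (simp add: tree_v_def tree_ray_def)
  then show ?thesis using c assms(3) by simp
qed

locale DA_lines =
  fixes q :: nat and F :: "('f, 'c) monoid_scheme" and \<phi> :: "'f \<Rightarrow> nat \<Rightarrow> nat"
  assumes bij_\<phi>: "\<And>g. g \<in> carrier F \<Longrightarrow> bij_betw (\<phi> g) {..<q} {..<q}" and two_le_q: "2 \<le> q"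
begin

abbreviation \<Gamma> where "\<Gamma> \<equiv> DA q F \<phi>"
abbreviation t where "t \<equiv> restrict shift_t (tree_V q)"
abbreviation rot where "rot g \<equiv> restrict (perm_below_v q (\<phi> g)) (tree_V q)"
abbreviation line_of where "line_of n \<equiv> from_nat_into (lines q) n"

definition line_index :: "(int \<Rightarrow> nat) \<Rightarrow> nat" where
  "line_index y = to_nat_on (lines q) (geodesic_line y)"

definition index_digits :: "nat \<Rightarrow> int \<Rightarrow> nat" where
  "index_digits n = inv_into (digit_seqs q) geodesic_line (line_of n)"

text \<open>Defined through g^(-1), so that \<sigma> is a right action and u \<mapsto> u \<circ> \<sigma> g a representation.\<close>
definition \<sigma> :: "(vert \<Rightarrow> vert) \<Rightarrow> nat \<Rightarrow> nat" where
  "\<sigma> g n = to_nat_on (lines q) ((inv\<^bsub>\<Gamma>\<^esub> g) ` line_of n)"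

definition b :: "(vert \<Rightarrow> vert) \<Rightarrow> nat \<Rightarrow> complex" where
  "b = height_cocycle \<sigma> (\<lambda>n. top_digit (index_digits n)) level_shift"

lemma q_pos: "0 < q" using two_le_q by simp

lemma zero_in_digit_seqs: "(\<lambda>_. 0) \<in> digit_seqs q"
  using q_pos by (simp add: digit_seqs_def)

lemma group_\<Gamma>: "group \<Gamma>"
  unfolding DA_def by (rule group.group_subgroup_generated[OF group_BijGroup])

lemma carrier_\<Gamma>_line_preserving: "g \<in> carrier \<Gamma> \<Longrightarrow> g \<in> line_preserving q"
  using DA_subset_line_preserving[where F = F and \<phi> = \<phi> and q = q] bij_\<phi> by blast

lemma carrier_\<Gamma>_Bij: "g \<in> carrier \<Gamma> \<Longrightarrow> g \<in> Bij (tree_V q)"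
  using carrier_\<Gamma>_line_preserving unfolding line_preserving_def by blast

lemma generators_in_\<Gamma>: "insert t (rot ` carrier F) \<subseteq> carrier \<Gamma>"
proof -
  have "insert t (rot ` carrier F) \<subseteq> carrier (BijGroup (tree_V q))"
    using shift_t_Bij perm_below_v_Bij bij_\<phi> by (auto simp: BijGroup_def)
  then show ?thesis
    unfolding DA_def by (rule group.subgroup_generated_subset_carrier_subset[OF group_BijGroup])
qed

lemma t_in_\<Gamma>: "t \<in> carrier \<Gamma>"
  using generators_in_\<Gamma> by blast

lemma rot_in_\<Gamma>: "g \<in> carrier F \<Longrightarrow> rot g \<in> carrier \<Gamma>"
  using generators_in_\<Gamma> by blast

lemma inv_\<Gamma>: assumes "g \<in> carrier \<Gamma>" shows "inv\<^bsub>\<Gamma>\<^esub> g = restrict (inv_into (tree_V q) g) (tree_V q)"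
proof -
  have "inv\<^bsub>\<Gamma>\<^esub> g = inv\<^bsub>BijGroup (tree_V q)\<^esub> g"
    using group.inv_subgroup_generated[OF group_BijGroup assms[unfolded DA_def]] unfolding DA_def .
  then show ?thesis using inv_BijGroup[OF carrier_\<Gamma>_Bij[OF assms]] by simp
qed

lemma mult_\<Gamma>:
  assumes "g \<in> carrier \<Gamma>" and "h \<in> carrier \<Gamma>" shows "g \<otimes>\<^bsub>\<Gamma>\<^esub> h = compose (tree_V q) g h"
proof -
  have "g \<otimes>\<^bsub>\<Gamma>\<^esub> h = g \<otimes>\<^bsub>BijGroup (tree_V q)\<^esub> h" unfolding DA_def by (simp only: mult_subgroup_generated)
  then show ?thesis using carrier_\<Gamma>_Bij[OF assms(1)] carrier_\<Gamma>_Bij[OF assms(2)] by (simp add: BijGroup_def)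
qed

lemma image_line_in_lines: "g \<in> carrier \<Gamma> \<Longrightarrow> A \<in> lines q \<Longrightarrow> g ` A \<in> lines q"
  using carrier_\<Gamma>_line_preserving unfolding line_preserving_def by blast

lemma line_of_in_lines: "line_of n \<in> lines q"
proof -
  have "lines q \<noteq> {}" using infinite_lines[OF two_le_q] by auto
  then show ?thesis by (rule from_nat_into)
qed

lemma index_digits_in_digit_seqs: "index_digits n \<in> digit_seqs q"
  unfolding index_digits_def using line_of_in_lines unfolding lines_def by (rule inv_into_into)

lemma line_index_index_digits [simp]: "line_index (index_digits n) = n"
proof -
  have "geodesic_line (index_digits n) = line_of n"
    unfolding index_digits_def using line_of_in_lines unfolding lines_def by (rule f_inv_into_f)
  then show ?thesis
    unfolding line_index_def using countable_lines infinite_lines[OF two_le_q] by simp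
qed

lemma index_digits_line_index: assumes "y \<in> digit_seqs q" shows "index_digits (line_index y) = y"
proof -
  have "geodesic_line y \<in> lines q" using assms unfolding lines_def by blast
  then have "line_of (line_index y) = geodesic_line y"
    unfolding line_index_def using countable_lines by simp
  then show ?thesis
    unfolding index_digits_def using inv_into_f_f[OF inj_on_subset[OF inj_geodesic_line] assms] by simp
qed

lemma line_index_inj: "y \<in> digit_seqs q \<Longrightarrow> y' \<in> digit_seqs q \<Longrightarrow> line_index y = line_index y' \<Longrightarrow> y = y'"
  by (metis index_digits_line_index)

lemma \<sigma>_mult: assumes "g \<in> carrier \<Gamma>" and "h \<in> carrier \<Gamma>" shows "\<sigma> (g \<otimes>\<^bsub>\<Gamma>\<^esub> h) = \<sigma> h \<circ> \<sigma> g"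
proof
  fix n
  interpret \<Gamma>: group \<Gamma> by (rule group_\<Gamma>)
  have "inv\<^bsub>\<Gamma>\<^esub> (g \<otimes>\<^bsub>\<Gamma>\<^esub> h) = inv\<^bsub>\<Gamma>\<^esub> h \<otimes>\<^bsub>\<Gamma>\<^esub> inv\<^bsub>\<Gamma>\<^esub> g"
    by (rule \<Gamma>.inv_mult_group[OF assms])
  also have "\<dots> = compose (tree_V q) (inv\<^bsub>\<Gamma>\<^esub> h) (inv\<^bsub>\<Gamma>\<^esub> g)"
    by (rule mult_\<Gamma>[OF \<Gamma>.inv_closed[OF assms(2)] \<Gamma>.inv_closed[OF assms(1)]])
  finally have inv_mult: "inv\<^bsub>\<Gamma>\<^esub> (g \<otimes>\<^bsub>\<Gamma>\<^esub> h) = compose (tree_V q) (inv\<^bsub>\<Gamma>\<^esub> h) (inv\<^bsub>\<Gamma>\<^esub> g)" .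
  have "(inv\<^bsub>\<Gamma>\<^esub> g) ` line_of n \<in> lines q"
    by (rule image_line_in_lines[OF \<Gamma>.inv_closed[OF assms(1)] line_of_in_lines])
  then have "line_of (\<sigma> g n) = (inv\<^bsub>\<Gamma>\<^esub> g) ` line_of n"
    unfolding \<sigma>_def by (rule from_nat_into_to_nat_on[OF countable_lines])
  moreover have "(inv\<^bsub>\<Gamma>\<^esub> (g \<otimes>\<^bsub>\<Gamma>\<^esub> h)) ` line_of n = (inv\<^bsub>\<Gamma>\<^esub> h) ` (inv\<^bsub>\<Gamma>\<^esub> g) ` line_of n"
    unfolding inv_mult by (rule image_compose[OF lines_subset[OF line_of_in_lines]])
  ultimately show "\<sigma> (g \<otimes>\<^bsub>\<Gamma>\<^esub> h) n = (\<sigma> h \<circ> \<sigma> g) n"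
    unfolding \<sigma>_def comp_def by (simp only:)
qed

lemma \<sigma>_one: "\<sigma> \<one>\<^bsub>\<Gamma>\<^esub> = id"
proof
  fix n
  have "inv\<^bsub>\<Gamma>\<^esub> \<one>\<^bsub>\<Gamma>\<^esub> = \<one>\<^bsub>\<Gamma>\<^esub>" by (rule monoid.inv_one[OF group.is_monoid[OF group_\<Gamma>]])
  also have "\<dots> = (\<lambda>x\<in>tree_V q. x)" unfolding DA_def by (simp add: BijGroup_def)
  finally have "(inv\<^bsub>\<Gamma>\<^esub> \<one>\<^bsub>\<Gamma>\<^esub>) ` line_of n = line_of n"
    by (simp only: image_restrict_subset[OF lines_subset[OF line_of_in_lines]] image_ident)
  then show "\<sigma> \<one>\<^bsub>\<Gamma>\<^esub> n = id n"
    unfolding \<sigma>_def id_def by (simp only: to_nat_on_from_nat_into_infinite[OF countable_lines infinite_lines[OF two_le_q]])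
qed

lemma \<sigma>_line_index:
  assumes "g \<in> carrier \<Gamma>" and "y' \<in> digit_seqs q" and "g ` geodesic_line y' = geodesic_line y"
  shows "\<sigma> g (line_index y) = line_index y'"
proof -
  have "geodesic_line y' \<in> lines q" using assms(2) unfolding lines_def by (rule imageI)
  then have "geodesic_line y \<in> lines q" unfolding assms(3)[symmetric] by (rule image_line_in_lines[OF assms(1)])
  then have "line_of (line_index y) = geodesic_line y"
    unfolding line_index_def by (rule from_nat_into_to_nat_on[OF countable_lines])
  moreover have "(inv\<^bsub>\<Gamma>\<^esub> g) ` geodesic_line y = geodesic_line y'"
    unfolding inv_\<Gamma>[OF assms(1)] assms(3)[symmetric]
    by (rule image_restrict_inv_into_image[OF carrier_\<Gamma>_Bij[OF assms(1)] geodesic_line_subset[OF assms(2)]])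
  ultimately show ?thesis unfolding \<sigma>_def line_index_def by (simp only:)
qed

lemma \<sigma>_t: assumes "y \<in> digit_seqs q" shows "\<sigma> t (line_index y) = line_index (shift_digits 1 y)"
proof (rule \<sigma>_line_index[OF t_in_\<Gamma> shift_digits_in_digit_seqs[OF assms]])
  have "t ` geodesic_line (shift_digits 1 y) = geodesic_line (shift_digits (-1) (shift_digits 1 y))"
    by (rule shift_t_geodesic_line[OF shift_digits_in_digit_seqs[OF assms]])
  then show "t ` geodesic_line (shift_digits 1 y) = geodesic_line y" by simp
qed

lemma \<sigma>_rot:
  assumes "g \<in> carrier F" and "y \<in> digit_seqs q"
  shows "\<sigma> (rot g) (line_index (perm_digit0 (\<phi> g) y)) = line_index y"
  by (rule \<sigma>_line_index[OF rot_in_\<Gamma>[OF assms(1)] assms(2) perm_below_v_geodesic_line[OF assms(2)]])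

lemma unitary_rep_\<sigma>: "unitary_rep \<Gamma> (\<lambda>g. perm_op (\<sigma> g))"
proof (rule group.unitary_rep_perm_op[OF group_\<Gamma>])
  show "\<sigma> (g \<otimes>\<^bsub>\<Gamma>\<^esub> h) = \<sigma> h \<circ> \<sigma> g" if "g \<in> carrier \<Gamma>" "h \<in> carrier \<Gamma>" for g h
    using that by (rule \<sigma>_mult)
qed (rule \<sigma>_one)

lemma level_shift_mult:
  assumes "g \<in> carrier \<Gamma>" and "h \<in> carrier \<Gamma>"
  shows "level_shift (g \<otimes>\<^bsub>\<Gamma>\<^esub> h) = level_shift g + level_shift h"
proof -
  have v: "tree_v \<in> tree_V q" by (rule tree_v_in_tree_V[OF q_pos])
  then have hv: "h tree_v \<in> tree_V q"
    using carrier_\<Gamma>_Bij[OF assms(2)] unfolding Bij_def bij_betw_def by blast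
  have "level_shift (g \<otimes>\<^bsub>\<Gamma>\<^esub> h) = fst (g (h tree_v))"
    unfolding level_shift_def mult_\<Gamma>[OF assms] compose_def using v by simp
  also have "\<dots> = fst (h tree_v) + level_shift g"
    by (rule fst_line_preserving[OF carrier_\<Gamma>_line_preserving[OF assms(1)] q_pos hv])
  also have "\<dots> = level_shift g + level_shift h"
    unfolding level_shift_def by simp
  finally show ?thesis .
qed

lemma b_mult:
  assumes "g \<in> carrier \<Gamma>" and "h \<in> carrier \<Gamma>"
  shows "b (g \<otimes>\<^bsub>\<Gamma>\<^esub> h) = vadd (b g) (perm_op (\<sigma> g) (b h))"
  using \<sigma>_mult[OF assms] level_shift_mult[OF assms]
  by (simp add: b_def height_cocycle_def vadd_def perm_op_def fun_eq_iff)

lemma b_one: "b \<one>\<^bsub>\<Gamma>\<^esub> = (\<lambda>_. 0)"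
proof -
  have "level_shift \<one>\<^bsub>\<Gamma>\<^esub> = 0"
    using tree_v_in_tree_V[OF q_pos] unfolding level_shift_def DA_def
    by (simp add: BijGroup_def tree_v_def tree_ray_def)
  then show ?thesis by (simp add: b_def height_cocycle_def \<sigma>_one)
qed

lemma b_t: "b t = (\<lambda>n. if n = line_index (\<lambda>_. 0) then 1 else 0)"
proof
  fix n
  define y where "y = index_digits n"
  have y: "y \<in> digit_seqs q" and n: "n = line_index y"
    unfolding y_def by (simp_all add: index_digits_in_digit_seqs)
  have shift: "shift_digits 1 y \<in> digit_seqs q" by (rule shift_digits_in_digit_seqs[OF y])
  have "level_shift t = 1"
    using tree_v_in_tree_V[OF q_pos] by (simp add: level_shift_def shift_t_def tree_v_def tree_ray_def)
  then have b_t_n: "b t n = of_int (top_digit (shift_digits 1 y) - top_digit y + 1)"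
    unfolding b_def height_cocycle_def n \<sigma>_t[OF y] index_digits_line_index[OF shift] index_digits_line_index[OF y]
    by simp
  show "b t n = (if n = line_index (\<lambda>_. 0) then 1 else 0)"
  proof (cases "y = (\<lambda>_. 0)")
    case True
    then show ?thesis using b_t_n n by simp
  next
    case False
    then have "n \<noteq> line_index (\<lambda>_. 0)" using y n line_index_inj zero_in_digit_seqs by blast
    then show ?thesis using b_t_n top_digit_shift_digits[OF y False, of 1] by simp
  qed
qed

text \<open>Permuting the digit 0 moves the top digit only if it sits at position 0, so b (rot g) is
  supported on the q lines whose digits vanish outside position 0.\<close>
lemma b_rot_ell2:
  assumes "g \<in> carrier F" shows "b (rot g) \<in> ell2"
proof (rule ell2_finite_support)
  let ?single = "(\<lambda>a. line_index ((\<lambda>_. 0)(0 := a))) ` {..<q}"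
  show "finite ?single" by simp
  fix n assume "n \<notin> ?single"
  define y where "y = index_digits n"
  have y: "y \<in> digit_seqs q" and n: "n = line_index y"
    unfolding y_def by (simp_all add: index_digits_in_digit_seqs)
  define y' where "y' = perm_digit0 (inv_into {..<q} (\<phi> g)) y"
  have "\<forall>a<q. inv_into {..<q} (\<phi> g) a < q"
    using bij_\<phi>[OF assms] by (metis bij_betw_def inv_into_into lessThan_iff)
  then have y': "y' \<in> digit_seqs q" unfolding y'_def using perm_digit0_in_digit_seqs[OF y] by blast
  have "\<sigma> (rot g) n = line_index y'"
    using \<sigma>_rot[OF assms y'] unfolding n y'_def perm_digit0_inverse[OF bij_\<phi>[OF assms] y] .
  moreover have "level_shift (rot g) = 0"
    using tree_v_in_tree_V[OF q_pos] by (simp add: level_shift_def perm_below_v_def tree_v_def tree_ray_def)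
  moreover have "top_digit y' = top_digit y"
  proof (cases "\<forall>k<0. y k = 0")
    case True
    have "\<exists>k. k \<noteq> 0 \<and> y k \<noteq> 0"
    proof (rule ccontr)
      assume "\<not> (\<exists>k. k \<noteq> 0 \<and> y k \<noteq> 0)"
      then have "y = (\<lambda>_. 0)(0 := y 0)" by (auto simp: fun_eq_iff)
      then have "n = line_index ((\<lambda>_. 0)(0 := y 0))" unfolding n by (rule arg_cong)
      moreover have "y 0 \<in> {..<q}" using y unfolding digit_seqs_def by auto
      ultimately have "n \<in> ?single" by (rule image_eqI)
      then show False using \<open>n \<notin> ?single\<close> by blast
    qed
    then obtain k where "0 < k" "y k \<noteq> 0" using True by (meson linorder_neqE)
    moreover have "finite {k. y k \<noteq> 0}" using y unfolding digit_seqs_def by auto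
    ultimately have "top_digit (y(0 := inv_into {..<q} (\<phi> g) (y 0))) = top_digit y"
      using top_digit_update_0 by blast
    moreover have "y' = y(0 := inv_into {..<q} (\<phi> g) (y 0))"
      unfolding y'_def perm_digit0_def using True by (rule if_P)
    ultimately show ?thesis by simp
  next
    case False
    have "y' = y" unfolding y'_def perm_digit0_def using False by (rule if_not_P)
    then show ?thesis by simp
  qed
  ultimately show "b (rot g) n = 0"
    unfolding b_def height_cocycle_def n
    by (simp add: index_digits_line_index[OF y] index_digits_line_index[OF y'])
qed

lemma b_ell2: assumes "g \<in> carrier \<Gamma>" shows "b g \<in> ell2"
proof -
  interpret \<Gamma>: group \<Gamma> by (rule group_\<Gamma>)
  have "b \<one>\<^bsub>\<Gamma>\<^esub> \<in> ell2" unfolding b_one by (rule ell2_zero)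
  then have "subgroup {g \<in> carrier \<Gamma>. b g \<in> ell2} \<Gamma>"
    using \<Gamma>.subgroup_ell2_values[where \<pi> = "\<lambda>g. perm_op (\<sigma> g)" and b = b] unitary_rep_\<sigma> b_mult
    by blast
  moreover have "b t \<in> ell2"
    unfolding b_t by (rule ell2_finite_support[of "{line_index (\<lambda>_. 0)}"]) auto
  then have "carrier (BijGroup (tree_V q)) \<inter> insert t (rot ` carrier F) \<subseteq> {g \<in> carrier \<Gamma>. b g \<in> ell2}"
    using generators_in_\<Gamma> b_rot_ell2 by blast
  ultimately have "carrier \<Gamma> \<subseteq> {g \<in> carrier \<Gamma>. b g \<in> ell2}"
    unfolding DA_def by (rule group.carrier_subgroup_generated_subset_subgroup[OF group_BijGroup])
  then show ?thesis using assms by blast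
qed

lemma nonzero_reduced_H1: "nonzero_reduced_H1 \<Gamma> (\<lambda>g. perm_op (\<sigma> g))"
proof -
  let ?n\<^sub>0 = "line_index (\<lambda>_. 0)"
  have "cocycle \<Gamma> (\<lambda>g. perm_op (\<sigma> g)) b"
    unfolding cocycle_def using b_ell2 b_mult by blast
  moreover have "\<sigma> t ?n\<^sub>0 = ?n\<^sub>0"
    using \<sigma>_t[OF zero_in_digit_seqs] by simp
  have fixed: "perm_op (\<sigma> t) \<xi> \<in> ell2 \<and> perm_op (\<sigma> t) \<xi> ?n\<^sub>0 = \<xi> ?n\<^sub>0" if "\<xi> \<in> ell2" for \<xi>
  proof -
    have "unitary_op (perm_op (\<sigma> t))" using unitary_rep_\<sigma> t_in_\<Gamma> unfolding unitary_rep_def by blast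
    then have "perm_op (\<sigma> t) \<xi> \<in> ell2" using that unfolding unitary_op_def by blast
    then show ?thesis using \<open>\<sigma> t ?n\<^sub>0 = ?n\<^sub>0\<close> by (simp add: perm_op_def)
  qed
  have "b t ?n\<^sub>0 \<noteq> 0" by (simp add: b_t)
  then have "\<not> in_closure_coboundaries \<Gamma> (\<lambda>g. perm_op (\<sigma> g)) b"
    using not_in_closure_coboundaries_at_fixed_coordinate[where \<pi> = "\<lambda>g. perm_op (\<sigma> g)"
        and g = t and G = \<Gamma> and b = b and n = ?n\<^sub>0] t_in_\<Gamma> b_ell2[OF t_in_\<Gamma>] fixed
    by blast
  ultimately show ?thesis unfolding nonzero_reduced_H1_def by blast
qed

lemma cspan_zero: "(\<lambda>_. 0) \<in> cspan S"
  unfolding cspan_def by (auto intro!: exI[of _ "\<lambda>_. 0"])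

text \<open>The line through the ray is fixed by t, so a vector of an invariant subspace living
  only there is first moved off it by a rotation below v.\<close>
lemma invariant_cspan_nonzero_off_ray:
  assumes "g\<^sub>1 \<in> carrier F" and "\<phi> g\<^sub>1 0 \<noteq> 0"
    and invariant: "\<And>g x. g \<in> carrier \<Gamma> \<Longrightarrow> x \<in> cspan S \<Longrightarrow> perm_op (\<sigma> g) x \<in> cspan S"
    and "w \<in> cspan S" and "w \<noteq> (\<lambda>_. 0)"
  obtains w' y where "w' \<in> cspan S" and "y \<in> digit_seqs q" and "y \<noteq> (\<lambda>_. 0)" and "w' (line_index y) \<noteq> 0"
proof -
  have "\<exists>n. w n \<noteq> 0" using assms(5) by (simp add: fun_eq_iff)
  then obtain n where n: "w n \<noteq> 0" ..
  define y where "y = index_digits n"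
  have y: "y \<in> digit_seqs q" and n_eq: "n = line_index y"
    unfolding y_def by (simp_all add: index_digits_in_digit_seqs)
  show ?thesis
  proof (cases "y = (\<lambda>_. 0)")
    case False
    show ?thesis by (rule that[OF assms(4) y False]) (use n n_eq in simp)
  next
    case True
    define y\<^sub>1 where "y\<^sub>1 = perm_digit0 (\<phi> g\<^sub>1) (\<lambda>_. 0)"
    have "\<forall>a<q. \<phi> g\<^sub>1 a < q" using bij_\<phi>[OF assms(1)] by (auto dest: bij_betwE)
    then have y\<^sub>1: "y\<^sub>1 \<in> digit_seqs q" unfolding y\<^sub>1_def by (rule perm_digit0_in_digit_seqs[OF zero_in_digit_seqs])
    have "y\<^sub>1 0 = \<phi> g\<^sub>1 0" unfolding y\<^sub>1_def perm_digit0_def by simp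
    have y\<^sub>1_nonzero: "y\<^sub>1 \<noteq> (\<lambda>_. 0)"
    proof
      assume "y\<^sub>1 = (\<lambda>_. 0)"
      with \<open>y\<^sub>1 0 = \<phi> g\<^sub>1 0\<close> assms(2) show False by simp
    qed
    have "perm_op (\<sigma> (rot g\<^sub>1)) w (line_index y\<^sub>1) = w (\<sigma> (rot g\<^sub>1) (line_index y\<^sub>1))"
      by (simp only: perm_op_def)
    also have "\<dots> = w (line_index y)"
      unfolding y\<^sub>1_def True by (simp only: \<sigma>_rot[OF assms(1) zero_in_digit_seqs])
    finally have moved: "perm_op (\<sigma> (rot g\<^sub>1)) w (line_index y\<^sub>1) = w n"
      by (simp only: n_eq)
    have "perm_op (\<sigma> (rot g\<^sub>1)) w (line_index y\<^sub>1) \<noteq> 0" unfolding moved by (rule n)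
    then show ?thesis
      by (rule that[OF invariant[OF rot_in_\<Gamma>[OF assms(1)] assms(4)] y\<^sub>1 y\<^sub>1_nonzero])
  qed
qed

lemma not_has_fd_subrep:
  assumes "g\<^sub>1 \<in> carrier F" and "\<phi> g\<^sub>1 0 \<noteq> 0"
  shows "\<not> has_fd_subrep \<Gamma> (\<lambda>g. perm_op (\<sigma> g))"
proof
  assume "has_fd_subrep \<Gamma> (\<lambda>g. perm_op (\<sigma> g))"
  then obtain S where S: "finite S" "S \<subseteq> ell2" and nontrivial: "cspan S \<noteq> {\<lambda>_. 0}"
    and "\<forall>g\<in>carrier \<Gamma>. \<forall>x\<in>cspan S. perm_op (\<sigma> g) x \<in> cspan S"
    unfolding has_fd_subrep_def by (elim exE conjE) (rule that)
  then have invariant: "\<And>g x. g \<in> carrier \<Gamma> \<Longrightarrow> x \<in> cspan S \<Longrightarrow> perm_op (\<sigma> g) x \<in> cspan S"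
    by blast
  have "\<exists>w\<in>cspan S. w \<noteq> (\<lambda>_. 0)"
  proof (rule ccontr)
    assume "\<not> (\<exists>w\<in>cspan S. w \<noteq> (\<lambda>_. 0))"
    then have "cspan S = {\<lambda>_. 0}" using cspan_zero by auto
    then show False using nontrivial by contradiction
  qed
  then obtain w where "w \<in> cspan S" "w \<noteq> (\<lambda>_. 0)" ..
  obtain w' y where w': "w' \<in> cspan S" and y: "y \<in> digit_seqs q" "y \<noteq> (\<lambda>_. 0)"
    and nonzero: "w' (line_index y) \<noteq> 0"
    by (rule invariant_cspan_nonzero_off_ray[OF assms invariant \<open>w \<in> cspan S\<close> \<open>w \<noteq> (\<lambda>_. 0)\<close>]) blast
  define orb where "orb c = line_index (shift_digits c y)" for c
  have inj: "inj orb"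
  proof (rule injI)
    fix c c' assume "orb c = orb c'"
    then have "shift_digits c y = shift_digits c' y"
      unfolding orb_def using line_index_inj shift_digits_in_digit_seqs[OF y(1)] by blast
    then have "top_digit (shift_digits c y) = top_digit (shift_digits c' y)" by simp
    then show "c = c'" using top_digit_shift_digits[OF y] by simp
  qed
  have step: "\<sigma> t (orb c) = orb (c + 1)" for c
    unfolding orb_def \<sigma>_t[OF shift_digits_in_digit_seqs[OF y(1)]] by (simp add: add.commute)
  have t_invariant: "(\<lambda>n. x (\<sigma> t n)) \<in> cspan S" if "x \<in> cspan S" for x
    using invariant[OF t_in_\<Gamma> that] unfolding perm_op_def .
  have "w' (orb 0) = 0"
    by (rule finite_invariant_cspan_vanishes_on_orbit[OF S t_invariant inj step w'])
  moreover have "orb 0 = line_index y" unfolding orb_def by simp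
  ultimately show False using nonzero by simp
qed

end

theorem proposition4p5:
  fixes F :: "('f, 'c) monoid_scheme" and \<phi> :: "'f \<Rightarrow> nat \<Rightarrow> nat" and q :: nat
  assumes "group F" and "finite (carrier F)" and "q \<ge> 2"
    and "faithful_action F {..<q} \<phi>"
    and "transitive_action F {..<q} \<phi>"
  shows "\<not> property_HFD (DA q F \<phi>)"
proof -
  have action: "group_action F {..<q} \<phi>" using assms(4) by (rule faithful_action.axioms(1))
  have "bij_betw (\<phi> g) {..<q} {..<q}" if "g \<in> carrier F" for g
    using group_action.bij_prop0[OF action that] unfolding Bij_def by simp
  then interpret DA_lines q F \<phi> using assms(3) by unfold_locales
  obtain g where g: "g \<in> carrier F" "\<phi> g 0 = 1"
    using transitive_action.unique_orbit[OF assms(5), of 0 1] assms(3) by auto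
  have "\<not> has_fd_subrep (DA q F \<phi>) (\<lambda>g. perm_op (\<sigma> g))"
    by (rule not_has_fd_subrep[OF g(1)]) (simp add: g(2))
  then show ?thesis
    unfolding property_HFD_def using unitary_rep_\<sigma> nonzero_reduced_H1 by blast
qed

end
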